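(* There exists a one-sided non-adaptive tester for $k$-monotonicity of functions $f\colon\{0,1\}^d\to\{0,1\}$ with query complexity $q(d,\varepsilon,k)=2^{O(\sqrt{d}\cdot\log d\cdot\log(1/\varepsilon))}$ (in particular, independent of $k$).
   Context: The hypercube $\{0,1\}^d$ is ordered coordinatewise. A function $f\colon\{0,1\}^d\to\{0,1\}$ is $k$-monotone if there is no chain $x_1\preceq\cdots\preceq x_{k+1}$ with $f(x_1)=1$ and $f(x_i)\neq f(x_{i+1})$ for all $i\in[k]$. Distance is the normalized Hamming distance $\Pr_x[f(x)\neq g(x)]$ over uniform $x$; $f$ is $\varepsilon$-far from $k$-monotone if its distance to every $k$-monotone function is at least $\varepsilon$. A tester, given $\varepsilon$ and query access to $f$, accepts $k$-monotone $f$ with probability at least $2/3$ and rejects $\varepsilon$-far $f$ with probability at least $2/3$; it is one-sided if it accepts $k$-monotone functions with probability $1$, and non-adaptive if its queries do not depend on previous answers. *)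

theory Defs
  imports "HOL-Probability.Probability_Mass_Function"
begin

text \<open>Points of the hypercube {0,1}^d are encoded as subsets of {0..<d};
  the coordinatewise order is set inclusion.\<close>

definition cube :: "nat \<Rightarrow> nat set set" where
  "cube d = Pow {..<d}"

definition k_monotone :: "nat \<Rightarrow> nat \<Rightarrow> (nat set \<Rightarrow> bool) \<Rightarrow> bool" where
  "k_monotone d k f \<longleftrightarrow>
     \<not> (\<exists>xs. length xs = Suc k \<and> (\<forall>i<Suc k. xs ! i \<in> cube d)
            \<and> (\<forall>i<k. xs ! i \<subseteq> xs ! Suc i)
            \<and> f (xs ! 0) \<and> (\<forall>i<k. f (xs ! i) \<noteq> f (xs ! Suc i)))"

definition cube_dist :: "nat \<Rightarrow> (nat set \<Rightarrow> bool) \<Rightarrow> (nat set \<Rightarrow> bool) \<Rightarrow> real" where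
  "cube_dist d f g = real (card {x \<in> cube d. f x \<noteq> g x}) / 2 ^ d"

definition eps_far :: "nat \<Rightarrow> nat \<Rightarrow> real \<Rightarrow> (nat set \<Rightarrow> bool) \<Rightarrow> bool" where
  "eps_far d k \<epsilon> f \<longleftrightarrow> (\<forall>g. k_monotone d k g \<longrightarrow> cube_dist d f g \<ge> \<epsilon>)"

text \<open>A non-adaptive randomized tester: a distribution over pairs (Q, D) of a query
  set Q (chosen before any answers) and a decision rule D which only sees the
  answers of f on Q.\<close>

type_synonym na_tester = "(nat set set \<times> ((nat set \<Rightarrow> bool) \<Rightarrow> bool)) pmf"

definition restrict_to :: "nat set set \<Rightarrow> (nat set \<Rightarrow> bool) \<Rightarrow> (nat set \<Rightarrow> bool)" where
  "restrict_to Q f = (\<lambda>x. if x \<in> Q then f x else False)"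

definition accept_prob :: "na_tester \<Rightarrow> (nat set \<Rightarrow> bool) \<Rightarrow> real" where
  "accept_prob T f = measure_pmf.prob T {(Q, D). D (restrict_to Q f)}"

end

theory Submission
  imports Defs "HOL-Probability.Hoeffding"
begin

text \<open>A function fails to be k-monotone exactly when the cube contains an alternating chain
  x_0 \<subseteq> \<dots> \<subseteq> x_k with f x_0 and alternating values (a violation), and a non-adaptive
  tester that rejects only on a violation among its queries is one-sided.
  Fix a layer a and let the depth of x be the length, capped at k, of the longest alternating chain
  of f ending at x inside the layers \<ge> a. The parity of the depth is k-monotone, and where it
  disagrees with f the point x either lies below layer a or has a violation in its down-set within
  the layers \<ge> a. By Hoeffding's inequality all but an \<epsilon>/2 fraction of the cube lies in the middle
  layers a..b with b - a = O(sqrt (d log(1/\<epsilon>))), so if f is \<epsilon>-far then an \<epsilon>/2 fraction of the points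
  x see a violation among the at most (d+1)^(b-a) points below x in layers a..b. Querying these sets
  for O(1/\<epsilon>) uniform points x finds a violation with probability 2/3 and uses
  2^O(sqrt d log d log(1/\<epsilon>)) queries. The cases d \<le> 1, k = 0, and \<epsilon> > 1/2 (where no function
  is \<epsilon>-far from 1-monotone) are handled by simpler testers.\<close>

section \<open>Alternating chains and violations\<close>

definition alternating_chain :: "'a::order set \<Rightarrow> ('a \<Rightarrow> bool) \<Rightarrow> 'a list \<Rightarrow> bool" where
  "alternating_chain S f xs \<longleftrightarrow>
     set xs \<subseteq> S \<and> sorted_wrt (\<le>) xs \<and> (\<forall>i<length xs. f (xs ! i) \<longleftrightarrow> even i)"

definition violation :: "nat \<Rightarrow> 'a::order set \<Rightarrow> ('a \<Rightarrow> bool) \<Rightarrow> bool" where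
  "violation k S f \<longleftrightarrow> (\<exists>xs. alternating_chain S f xs \<and> length xs = Suc k)"

lemma alternating_iff_nth_Suc:
  "(\<forall>i<Suc k. f (xs ! i) \<longleftrightarrow> even i) \<longleftrightarrow> f (xs ! 0) \<and> (\<forall>i<k. f (xs ! i) \<noteq> f (xs ! Suc i))"
proof -
  have "(\<forall>i\<le>n. f (xs ! i) \<longleftrightarrow> even i) \<longleftrightarrow> f (xs ! 0) \<and> (\<forall>i<n. f (xs ! i) \<noteq> f (xs ! Suc i))" for n
    by (induction n) (auto simp: le_Suc_eq less_Suc_eq)
  then show ?thesis by (simp add: less_Suc_eq_le)
qed

lemma k_monotone_iff_no_violation: "k_monotone d k f \<longleftrightarrow> \<not> violation k (cube d) f"
proof -
  have "alternating_chain (cube d) f xs \<longleftrightarrow> (\<forall>i<Suc k. xs ! i \<in> cube d)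
      \<and> (\<forall>i<k. xs ! i \<subseteq> xs ! Suc i) \<and> f (xs ! 0) \<and> (\<forall>i<k. f (xs ! i) \<noteq> f (xs ! Suc i))"
    if "length xs = Suc k" for xs
    using that unfolding alternating_chain_def alternating_iff_nth_Suc[symmetric]
    by (auto simp: sorted_wrt_iff_nth_Suc_transp set_conv_nth)
  then show ?thesis
    unfolding k_monotone_def violation_def by metis
qed

section \<open>Repairing a function by the parity of its alternation depth\<close>

definition ends_alternating_chain :: "'a::order set \<Rightarrow> ('a \<Rightarrow> bool) \<Rightarrow> nat \<Rightarrow> 'a \<Rightarrow> bool" where
  "ends_alternating_chain S f j x \<longleftrightarrow>
     (\<exists>xs. alternating_chain S f xs \<and> xs \<noteq> [] \<and> last xs = x \<and> j \<le> length xs)"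

definition alternation_depth :: "'a::order set \<Rightarrow> ('a \<Rightarrow> bool) \<Rightarrow> nat \<Rightarrow> 'a \<Rightarrow> nat" where
  "alternation_depth S f k x = Max {j. j \<le> k \<and> (j = 0 \<or> ends_alternating_chain S f j x)}"

lemma alternating_chain_last:
  assumes "alternating_chain S f xs" "xs \<noteq> []"
  shows "f (last xs) \<longleftrightarrow> odd (length xs)"
  using assms by (cases xs rule: rev_exhaust) (auto simp: alternating_chain_def)

lemma alternating_chain_snoc:
  "alternating_chain S f (xs @ [y]) \<longleftrightarrow>
     alternating_chain S f xs \<and> y \<in> S \<and> (\<forall>x\<in>set xs. x \<le> y) \<and> (f y \<longleftrightarrow> even (length xs))"
  by (auto simp: alternating_chain_def sorted_wrt_append nth_append less_Suc_eq)

lemma alternating_chain_extend: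
  assumes chain: "alternating_chain S f xs" "xs \<noteq> []" and "last xs \<le> y" "y \<in> S"
  obtains ys where "alternating_chain S f ys" "ys \<noteq> []" "last ys = y" "length xs \<le> length ys"
proof -
  obtain zs l where xs: "xs = zs @ [l]"
    using chain(2) by (cases xs rule: rev_exhaust) auto
  have zs: "alternating_chain S f zs" "\<forall>z\<in>set zs. z \<le> y" "f l \<longleftrightarrow> even (length zs)"
    using chain(1) assms(3) unfolding xs alternating_chain_snoc by (auto intro: order_trans)
  show thesis
  proof (cases "f y = f l")
    case True
    then have "alternating_chain S f (zs @ [y])"
      using zs assms(4) by (simp add: alternating_chain_snoc)
    then show thesis by (rule that) (auto simp: xs)
  next
    case False
    then have "alternating_chain S f (xs @ [y])"
      unfolding alternating_chain_snoc using chain(1) zs assms(3,4) by (auto simp: xs)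
    then show thesis by (rule that) auto
  qed
qed

lemma ends_alternating_chain_mono:
  "ends_alternating_chain S f j x \<Longrightarrow> x \<le> y \<Longrightarrow> y \<in> S \<Longrightarrow> ends_alternating_chain S f j y"
  unfolding ends_alternating_chain_def
  by (elim exE conjE, erule alternating_chain_extend) (auto intro: order_trans)

lemma ends_alternating_chain_in: "ends_alternating_chain S f j x \<Longrightarrow> x \<in> S"
  unfolding ends_alternating_chain_def alternating_chain_def by auto

lemma
  shows alternation_depth_le: "alternation_depth S f k x \<le> k"
    and alternation_depth_ends:
      "alternation_depth S f k x \<noteq> 0 \<Longrightarrow> ends_alternating_chain S f (alternation_depth S f k x) x"
    and alternation_depth_ge:
      "j \<le> k \<Longrightarrow> ends_alternating_chain S f j x \<Longrightarrow> j \<le> alternation_depth S f k x"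
proof -
  let ?J = "{j. j \<le> k \<and> (j = 0 \<or> ends_alternating_chain S f j x)}"
  have fin: "finite ?J" by (rule finite_subset[of _ "{..k}"]) auto
  have "alternation_depth S f k x \<in> ?J"
    unfolding alternation_depth_def by (rule Max_in) (use fin in auto)
  moreover have "\<And>j. j \<in> ?J \<Longrightarrow> j \<le> alternation_depth S f k x"
    unfolding alternation_depth_def using fin by (rule Max_ge)
  ultimately show "alternation_depth S f k x \<le> k"
    "alternation_depth S f k x \<noteq> 0 \<Longrightarrow> ends_alternating_chain S f (alternation_depth S f k x) x"
    "j \<le> k \<Longrightarrow> ends_alternating_chain S f j x \<Longrightarrow> j \<le> alternation_depth S f k x"
    by auto
qed

lemma alternation_depth_mono:
  assumes "x \<le> y" "x \<in> S \<Longrightarrow> y \<in> S"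
  shows "alternation_depth S f k x \<le> alternation_depth S f k y"
proof (cases "alternation_depth S f k x = 0")
  case False
  then have "ends_alternating_chain S f (alternation_depth S f k x) x"
    by (rule alternation_depth_ends)
  with assms have "ends_alternating_chain S f (alternation_depth S f k x) y"
    by (meson ends_alternating_chain_in ends_alternating_chain_mono)
  then show ?thesis by (simp add: alternation_depth_ge alternation_depth_le)
qed simp

lemma alternating_chain_take: "alternating_chain S f xs \<Longrightarrow> alternating_chain S f (take n xs)"
  unfolding alternating_chain_def by (auto dest: in_set_takeD)

lemma alternating_chain_atMost_last:
  assumes "alternating_chain S f xs" "xs \<noteq> []"
  shows "alternating_chain (S \<inter> {..last xs}) f xs"
proof -
  obtain zs l where "xs = zs @ [l]"
    using assms(2) by (cases xs rule: rev_exhaust) auto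
  then show ?thesis
    using assms(1) by (auto simp: alternating_chain_def sorted_wrt_append)
qed

lemma violation_if_ends_alternating_chain:
  assumes "ends_alternating_chain S f (Suc k) x"
  shows "violation k (S \<inter> {..x}) f"
proof -
  obtain xs where xs: "alternating_chain S f xs" "xs \<noteq> []" "last xs = x" "Suc k \<le> length xs"
    using assms unfolding ends_alternating_chain_def by blast
  then have "alternating_chain (S \<inter> {..x}) f (take (Suc k) xs)"
    using alternating_chain_atMost_last alternating_chain_take by blast
  then show ?thesis
    unfolding violation_def using xs(4) by (intro exI[of _ "take (Suc k) xs"]) simp
qed

lemma no_violation_odd_alternation_depth:
  assumes up: "\<And>x y. x \<in> S \<Longrightarrow> y \<in> U \<Longrightarrow> x \<le> y \<Longrightarrow> y \<in> S"
  shows "\<not> violation k U (\<lambda>x. odd (alternation_depth S f k x))"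
proof
  assume "violation k U (\<lambda>x. odd (alternation_depth S f k x))"
  then obtain xs where xs: "alternating_chain U (\<lambda>x. odd (alternation_depth S f k x)) xs"
    and len: "length xs = Suc k"
    unfolding violation_def by blast
  let ?\<delta> = "\<lambda>i. alternation_depth S f k (xs ! i)"
  have parity: "odd (?\<delta> i) \<longleftrightarrow> even i" if "i \<le> k" for i
    using xs that len unfolding alternating_chain_def by auto
  \<comment> \<open>The depth is monotone along the chain and changes parity at each step.\<close>
  have "Suc i \<le> ?\<delta> i" if "i \<le> k" for i
    using that
  proof (induction i)
    case 0
    then show ?case using parity[of 0] by (cases "?\<delta> 0") auto
  next
    case (Suc i)
    have "xs ! i \<le> xs ! Suc i" "xs ! Suc i \<in> U"
      using xs Suc.prems len unfolding alternating_chain_def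
      by (auto simp: sorted_wrt_iff_nth_less)
    then have "?\<delta> i \<le> ?\<delta> (Suc i)"
      using up by (intro alternation_depth_mono) auto
    moreover have "?\<delta> i \<noteq> ?\<delta> (Suc i)"
      using parity[of i] parity[of "Suc i"] Suc.prems by auto
    ultimately show ?case using Suc by simp
  qed
  from this[of k] show False
    using alternation_depth_le[of S f k "xs ! k"] by simp
qed

lemma alternation_depth_mismatch:
  assumes "f x \<noteq> odd (alternation_depth S f k x)"
  shows "violation k (S \<inter> {..x}) f \<or> (x \<notin> S \<and> f x)"
proof (cases "ends_alternating_chain S f (Suc k) x")
  case True
  then show ?thesis by (simp add: violation_if_ends_alternating_chain)
next
  case short: False
  let ?\<delta> = "alternation_depth S f k x"
  have short': "j \<le> k" if "ends_alternating_chain S f j x" for j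
  proof (rule ccontr)
    assume "\<not> j \<le> k"
    then show False
      using short that unfolding ends_alternating_chain_def by (auto simp: not_le)
  qed
  show ?thesis
  proof (cases "?\<delta> = 0")
    case True
    have "x \<notin> S" if "x \<in> S" "f x"
    proof -
      have "alternating_chain S f [x]"
        using that by (simp add: alternating_chain_def)
      then have "ends_alternating_chain S f 1 x"
        unfolding ends_alternating_chain_def by fastforce
      then show ?thesis
        using True short' alternation_depth_ge by fastforce
    qed
    then show ?thesis using assms True by auto
  next
    case False
    then obtain xs where xs: "alternating_chain S f xs" "xs \<noteq> []" "last xs = x" "?\<delta> \<le> length xs"
      using alternation_depth_ends unfolding ends_alternating_chain_def by blast
    then have "ends_alternating_chain S f (length xs) x"
      unfolding ends_alternating_chain_def by blast
    then have "length xs = ?\<delta>"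
      using xs(4) short' alternation_depth_ge by (meson le_antisym)
    then show ?thesis
      using assms alternating_chain_last[OF xs(1,2)] xs(3) by simp
  qed
qed

section \<open>Testers that reject exactly on a violation among the queries\<close>

lemma finite_cube [simp]: "finite (cube d)"
  by (simp add: cube_def)

lemma card_cube: "card (cube d) = 2 ^ d"
  by (simp add: cube_def card_Pow)

lemma alternating_chain_cong:
  assumes "\<And>x. x \<in> S \<Longrightarrow> f x = g x"
  shows "alternating_chain S f xs \<longleftrightarrow> alternating_chain S g xs"
proof -
  have "f (xs ! i) = g (xs ! i)" if "set xs \<subseteq> S" "i < length xs" for i
    using assms that nth_mem by blast
  then show ?thesis unfolding alternating_chain_def by (intro conj_cong refl) auto
qed

lemma violation_restrict_to: "violation k Q (restrict_to Q f) \<longleftrightarrow> violation k Q f"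
proof -
  have "alternating_chain Q (restrict_to Q f) xs \<longleftrightarrow> alternating_chain Q f xs" for xs
    by (rule alternating_chain_cong) (simp add: restrict_to_def)
  then show ?thesis by (simp add: violation_def)
qed

lemma violation_mono: "violation k Q f \<Longrightarrow> Q \<subseteq> Q' \<Longrightarrow> violation k Q' f"
  unfolding violation_def alternating_chain_def by blast

definition one_sided_tester :: "nat \<Rightarrow> nat \<Rightarrow> real \<Rightarrow> real \<Rightarrow> na_tester \<Rightarrow> bool" where
  "one_sided_tester d k \<epsilon> q T \<longleftrightarrow>
     (\<forall>(Q, D) \<in> set_pmf T. Q \<subseteq> cube d \<and> real (card Q) \<le> q)
     \<and> (\<forall>f. k_monotone d k f \<longrightarrow> accept_prob T f = 1)
     \<and> (\<forall>f. eps_far d k \<epsilon> f \<longrightarrow> accept_prob T f \<le> 1 / 3)"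

definition violation_tester :: "nat \<Rightarrow> nat set set pmf \<Rightarrow> na_tester" where
  "violation_tester k QS = map_pmf (\<lambda>Q. (Q, \<lambda>h. \<not> violation k Q h)) QS"

lemma accept_prob_violation_tester:
  "accept_prob (violation_tester k QS) f = measure_pmf.prob QS {Q. \<not> violation k Q f}"
  by (simp add: accept_prob_def violation_tester_def vimage_def violation_restrict_to)

lemma one_sided_tester_violation_tester:
  assumes queries: "\<And>Q. Q \<in> set_pmf QS \<Longrightarrow> Q \<subseteq> cube d \<and> real (card Q) \<le> q"
    and far: "\<And>f. eps_far d k \<epsilon> f \<Longrightarrow> measure_pmf.prob QS {Q. \<not> violation k Q f} \<le> 1 / 3"
  shows "one_sided_tester d k \<epsilon> q (violation_tester k QS)"
  unfolding one_sided_tester_def accept_prob_violation_tester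
proof (intro conjI allI impI)
  show "\<forall>(Q, D) \<in> set_pmf (violation_tester k QS). Q \<subseteq> cube d \<and> real (card Q) \<le> q"
    using queries by (auto simp: violation_tester_def)
  fix f assume "k_monotone d k f"
  then have "\<not> violation k Q f" if "Q \<in> set_pmf QS" for Q
    using queries[OF that] violation_mono k_monotone_iff_no_violation by blast
  then show "measure_pmf.prob QS {Q. \<not> violation k Q f} = 1"
    by (simp add: measure_pmf.prob_eq_1 AE_pmfI)
qed (use far in blast)

lemma eps_far_imp_not_k_monotone: "0 < \<epsilon> \<Longrightarrow> eps_far d k \<epsilon> f \<Longrightarrow> \<not> k_monotone d k f"
  using cube_dist_def[of d f f] unfolding eps_far_def by force

lemma one_sided_tester_exhaustive:
  assumes "0 < \<epsilon>"
  shows "one_sided_tester d k \<epsilon> (2 ^ d) (violation_tester k (return_pmf (cube d)))"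
proof (rule one_sided_tester_violation_tester)
  fix f assume "eps_far d k \<epsilon> f"
  then have "violation k (cube d) f"
    using assms eps_far_imp_not_k_monotone k_monotone_iff_no_violation by blast
  then show "measure_pmf.prob (return_pmf (cube d)) {Q. \<not> violation k Q f} \<le> 1 / 3"
    by simp
qed (simp add: card_cube)

definition sample_queries :: "nat \<Rightarrow> (nat set \<Rightarrow> nat set set) \<Rightarrow> nat \<Rightarrow> nat set set pmf" where
  "sample_queries d N r = map_pmf (\<lambda>v. \<Union>i<r. N (v i)) (Pi_pmf {..<r} {} (\<lambda>_. pmf_of_set (cube d)))"

lemma set_pmf_sample_queries:
  assumes "Q \<in> set_pmf (sample_queries d N r)"
  obtains v where "\<forall>i<r. v i \<in> cube d" "Q = (\<Union>i<r. N (v i))"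
proof -
  have "cube d \<noteq> {}" by (auto simp: cube_def)
  then show thesis
    using assms that by (auto simp: sample_queries_def set_Pi_pmf PiE_dflt_def)
qed

lemma one_minus_power_le_third:
  fixes p :: real
  assumes "0 \<le> p" "p \<le> 1" "2 \<le> p * r"
  shows "(1 - p) ^ r \<le> 1 / 3"
proof -
  have "(1 - p) ^ r \<le> exp (- p) ^ r"
    using assms exp_ge_add_one_self[of "- p"] by (intro power_mono) auto
  also have "\<dots> = exp (- (p * r))"
    by (simp add: exp_of_nat_mult[symmetric] mult.commute)
  also have "\<dots> \<le> exp (- 2)"
    using assms(3) by simp
  also have "\<dots> \<le> 1 / 3"
  proof -
    have "3 \<le> exp (2 :: real)"
      using exp_lower_Taylor_quadratic[of 2] by simp
    then show ?thesis
      by (simp add: exp_minus inverse_eq_divide)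
  qed
  finally show ?thesis .
qed

lemma sample_queries_miss_prob:
  assumes G: "G \<subseteq> cube d" and viol: "\<And>x. x \<in> G \<Longrightarrow> violation k (N x) f"
    and many: "2 * 2 ^ d \<le> real (card G) * r"
  shows "measure_pmf.prob (sample_queries d N r) {Q. \<not> violation k Q f} \<le> 1 / 3"
proof -
  let ?V = "Pi_pmf {..<r} {} (\<lambda>_. pmf_of_set (cube d))"
  let ?p = "real (card G) / 2 ^ d"
  have "{v. \<not> violation k (\<Union>i<r. N (v i)) f} \<subseteq> Pi {..<r} (\<lambda>_. - G)"
  proof (intro subsetI Pi_I ComplI)
    fix v i assume "v \<in> {v. \<not> violation k (\<Union>i<r. N (v i)) f}" "i \<in> {..<r}" "v i \<in> G"
    then show False
      using viol violation_mono[of k "N (v i)" f "\<Union>i<r. N (v i)"] by blast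
  qed
  then have "measure_pmf.prob (sample_queries d N r) {Q. \<not> violation k Q f}
      \<le> measure_pmf.prob ?V (Pi {..<r} (\<lambda>_. - G))"
    unfolding sample_queries_def by (simp add: vimage_def measure_pmf.finite_measure_mono)
  also have "\<dots> = measure_pmf.prob (pmf_of_set (cube d)) (- G) ^ r"
    by (simp add: measure_Pi_pmf_Pi)
  also have "measure_pmf.prob (pmf_of_set (cube d)) (- G) = 1 - ?p"
  proof -
    have "cube d \<noteq> {}" by (auto simp: cube_def)
    moreover have "card (cube d \<inter> - G) = 2 ^ d - card G"
      using G by (simp add: Diff_eq[symmetric] card_Diff_subset finite_subset card_cube)
    moreover have "card G \<le> 2 ^ d"
      using card_mono[OF finite_cube G] by (simp add: card_cube)
    ultimately show ?thesis
      by (simp add: measure_pmf_of_set card_cube of_nat_diff field_simps)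
  qed
  also have "(1 - ?p) ^ r \<le> 1 / 3"
  proof (rule one_minus_power_le_third)
    show "?p \<le> 1"
      using card_mono[OF finite_cube G] by (simp add: card_cube)
    show "2 \<le> ?p * r"
      using many by (simp add: field_simps)
  qed simp
  finally show ?thesis .
qed

lemma one_sided_tester_sampling:
  assumes N: "\<And>x. x \<in> cube d \<Longrightarrow> N x \<subseteq> cube d \<and> card (N x) \<le> M"
    and far: "\<And>f. eps_far d k \<epsilon> f \<Longrightarrow>
      \<exists>G\<subseteq>cube d. (\<forall>x\<in>G. violation k (N x) f) \<and> 2 * 2 ^ d \<le> real (card G) * r"
  shows "one_sided_tester d k \<epsilon> (real (r * M)) (violation_tester k (sample_queries d N r))"
proof (rule one_sided_tester_violation_tester)
  fix Q assume "Q \<in> set_pmf (sample_queries d N r)"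
  then obtain v where v: "\<forall>i<r. v i \<in> cube d" "Q = (\<Union>i<r. N (v i))"
    by (rule set_pmf_sample_queries)
  have "card Q \<le> (\<Sum>i<r. card (N (v i)))"
    unfolding v(2) by (rule card_UN_le) simp
  also have "\<dots> \<le> r * M"
    using sum_mono[of "{..<r}" "\<lambda>i. card (N (v i))" "\<lambda>_. M"] v(1) N by simp
  finally have "real (card Q) \<le> real (r * M)"
    by (rule of_nat_mono)
  moreover have "Q \<subseteq> cube d"
    using v N by auto
  ultimately show "Q \<subseteq> cube d \<and> real (card Q) \<le> real (r * M)" by blast
next
  fix f assume "eps_far d k \<epsilon> f"
  then show "measure_pmf.prob (sample_queries d N r) {Q. \<not> violation k Q f} \<le> 1 / 3"
    using far sample_queries_miss_prob by metis
qed

lemma k_monotone_False: "k_monotone d k (\<lambda>_. False)"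
  by (simp add: k_monotone_def)

lemma eps_far_card_disagree:
  assumes "eps_far d k \<epsilon> f" "k_monotone d k g"
  shows "\<epsilon> * 2 ^ d \<le> real (card {x \<in> cube d. f x \<noteq> g x})"
proof -
  have "\<epsilon> \<le> cube_dist d f g"
    using assms unfolding eps_far_def by blast
  then show ?thesis
    by (simp add: cube_dist_def field_simps)
qed

lemma eps_far_card_true:
  "eps_far d k \<epsilon> f \<Longrightarrow> \<epsilon> * 2 ^ d \<le> real (card {x \<in> cube d. f x})"
  using eps_far_card_disagree[OF _ k_monotone_False] by simp

lemma not_eps_far_if_half_lt:
  assumes "1 \<le> k" "1 / 2 < \<epsilon>"
  shows "\<not> eps_far d k \<epsilon> f"
proof
  assume far: "eps_far d k \<epsilon> f"
  have "k_monotone d k (\<lambda>_. True)"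
    using assms(1) unfolding k_monotone_def by (auto dest: spec[of _ 0])
  then have "\<epsilon> * 2 ^ d \<le> real (card {x \<in> cube d. \<not> f x})"
    using eps_far_card_disagree[OF far, of "\<lambda>_. True"] by simp
  moreover have "\<epsilon> * 2 ^ d \<le> real (card {x \<in> cube d. f x})"
    using far by (rule eps_far_card_true)
  moreover have "real (card {x \<in> cube d. f x}) + real (card {x \<in> cube d. \<not> f x}) = 2 ^ d"
  proof -
    have "{x \<in> cube d. f x} \<union> {x \<in> cube d. \<not> f x} = cube d"
      "{x \<in> cube d. f x} \<inter> {x \<in> cube d. \<not> f x} = {}" by auto
    then show ?thesis
      using card_Un_disjoint[of "{x \<in> cube d. f x}" "{x \<in> cube d. \<not> f x}"] card_cube[of d]
      by (simp flip: of_nat_add)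
  qed
  ultimately have "(2 * \<epsilon>) * 2 ^ d \<le> 1 * 2 ^ d"
    by linarith
  then show False
    using assms(2) by (simp add: mult_le_cancel_right)
qed

lemma one_sided_tester_trivial:
  assumes "1 \<le> k" "1 / 2 < \<epsilon>"
  shows "one_sided_tester d k \<epsilon> 0 (violation_tester k (return_pmf {}))"
  by (rule one_sided_tester_violation_tester) (use assms not_eps_far_if_half_lt in auto)

lemma one_sided_tester_k0:
  assumes "0 < \<epsilon>"
  shows "one_sided_tester d 0 \<epsilon> (real (nat \<lceil>4 / \<epsilon>\<rceil>))
           (violation_tester 0 (sample_queries d (\<lambda>x. {x}) (nat \<lceil>4 / \<epsilon>\<rceil>)))"
proof -
  have "\<exists>G\<subseteq>cube d. (\<forall>x\<in>G. violation 0 {x} f) \<and> 2 * 2 ^ d \<le> real (card G) * nat \<lceil>4 / \<epsilon>\<rceil>"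
    if "eps_far d 0 \<epsilon> f" for f
  proof (intro exI conjI)
    show "\<forall>x\<in>{x \<in> cube d. f x}. violation 0 {x} f"
      unfolding violation_def alternating_chain_def by (auto intro!: exI[of _ "[_]"])
    have "\<epsilon> * 2 ^ d * (4 / \<epsilon>) \<le> real (card {x \<in> cube d. f x}) * nat \<lceil>4 / \<epsilon>\<rceil>"
      using eps_far_card_true[OF that] assms
      by (intro mult_mono) (auto intro: real_nat_ceiling_ge)
    moreover have "2 * 2 ^ d \<le> \<epsilon> * 2 ^ d * (4 / \<epsilon>)"
      using assms by simp
    ultimately show "2 * 2 ^ d \<le> real (card {x \<in> cube d. f x}) * nat \<lceil>4 / \<epsilon>\<rceil>"
      by linarith
  qed auto
  then show ?thesis
    using one_sided_tester_sampling[of d "\<lambda>x. {x}" 1] by simp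
qed

section \<open>The middle-layer tester\<close>

lemma eps_far_layer_violations:
  fixes a b :: nat
  assumes far: "eps_far d k \<epsilon> f"
  defines "S \<equiv> {y \<in> cube d. a \<le> card y}"
  shows "\<epsilon> * 2 ^ d \<le> real (card {x \<in> cube d. card x < a}) + real (card {x \<in> cube d. b < card x})
           + real (card {x \<in> cube d. card x \<le> b \<and> violation k (S \<inter> {..x}) f})"
proof -
  let ?g = "\<lambda>x. odd (alternation_depth S f k x)"
  let ?low = "{x \<in> cube d. card x < a}" and ?high = "{x \<in> cube d. b < card x}"
    and ?G = "{x \<in> cube d. card x \<le> b \<and> violation k (S \<inter> {..x}) f}"
  have "y \<in> S" if "x \<in> S" "y \<in> cube d" "x \<le> y" for x y
    using that card_mono[of y x] finite_subset[of y "{..<d}"] unfolding S_def cube_def by auto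
  then have "k_monotone d k ?g"
    unfolding k_monotone_iff_no_violation by (rule no_violation_odd_alternation_depth)
  then have "\<epsilon> * 2 ^ d \<le> real (card {x \<in> cube d. f x \<noteq> ?g x})"
    by (rule eps_far_card_disagree[OF far])
  also have "\<dots> \<le> real (card (?low \<union> ?high \<union> ?G))"
  proof -
    have "{x \<in> cube d. f x \<noteq> ?g x} \<subseteq> ?low \<union> ?high \<union> ?G"
    proof
      fix x assume x: "x \<in> {x \<in> cube d. f x \<noteq> ?g x}"
      then have "violation k (S \<inter> {..x}) f \<or> (x \<notin> S \<and> f x)"
        by (intro alternation_depth_mismatch) simp
      then show "x \<in> ?low \<union> ?high \<union> ?G"
        using x unfolding S_def by (cases "b < card x") auto
    qed
    then show ?thesis
      by (intro of_nat_mono card_mono) simp_all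
  qed
  also have "\<dots> \<le> real (card ?low) + real (card ?high) + real (card ?G)"
    using card_Un_le[of "?low \<union> ?high" ?G] card_Un_le[of ?low ?high] by linarith
  finally show ?thesis .
qed

lemma card_subsets_card_le:
  assumes "finite X"
  shows "card {z. z \<subseteq> X \<and> card z \<le> w} \<le> (card X + 1) ^ w"
proof -
  let ?n = "card X"
  have "{z. z \<subseteq> X \<and> card z \<le> w} = (\<Union>j\<le>w. {z. z \<subseteq> X \<and> card z = j})"
    by auto
  then have "card {z. z \<subseteq> X \<and> card z \<le> w} \<le> (\<Sum>j\<le>w. card {z. z \<subseteq> X \<and> card z = j})"
    using card_UN_le[of "{..w}" "\<lambda>j. {z. z \<subseteq> X \<and> card z = j}"] by simp
  also have "\<dots> = (\<Sum>j\<le>w. ?n choose j)"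
    using n_subsets[OF assms] by simp
  also have "\<dots> \<le> (\<Sum>j\<le>w. (w choose j) * ?n ^ j * 1 ^ (w - j))"
  proof (rule sum_mono)
    fix j assume "j \<in> {..w}"
    then have "1 \<le> w choose j" by (simp add: Suc_le_eq)
    moreover have "?n choose j \<le> ?n ^ j"
      by (cases "j \<le> ?n") (auto simp: binomial_le_pow binomial_eq_0)
    ultimately have "?n choose j \<le> (w choose j) * ?n ^ j"
      by (metis le_trans mult.left_neutral mult_le_mono1)
    then show "?n choose j \<le> (w choose j) * ?n ^ j * 1 ^ (w - j)"
      by simp
  qed
  also have "\<dots> = (?n + 1) ^ w"
    by (subst binomial_ring) simp
  finally show ?thesis .
qed

lemma card_layer_interval:
  assumes "x \<in> cube d" "card x \<le> b"
  shows "card ({y \<in> cube d. a \<le> card y} \<inter> {..x}) \<le> (d + 1) ^ (b - a)"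
proof -
  have fin: "finite x" and "card x \<le> d"
    using assms(1) card_mono[of "{..<d}" x] by (auto simp: cube_def finite_subset)
  have "{y \<in> cube d. a \<le> card y} \<inter> {..x} \<subseteq> (\<lambda>z. x - z) ` {z. z \<subseteq> x \<and> card z \<le> b - a}"
  proof
    fix y assume y: "y \<in> {y \<in> cube d. a \<le> card y} \<inter> {..x}"
    then have "card (x - y) \<le> b - a" "y = x - (x - y)"
      using fin assms(2) by (auto simp: card_Diff_subset finite_subset)
    then show "y \<in> (\<lambda>z. x - z) ` {z. z \<subseteq> x \<and> card z \<le> b - a}" by blast
  qed
  then have "card ({y \<in> cube d. a \<le> card y} \<inter> {..x})
      \<le> card ((\<lambda>z. x - z) ` {z. z \<subseteq> x \<and> card z \<le> b - a})"
    using fin by (intro card_mono) auto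
  also have "\<dots> \<le> card {z. z \<subseteq> x \<and> card z \<le> b - a}"
    using fin by (intro card_image_le) auto
  also have "\<dots> \<le> (card x + 1) ^ (b - a)"
    using fin by (rule card_subsets_card_le)
  also have "\<dots> \<le> (d + 1) ^ (b - a)"
    using \<open>card x \<le> d\<close> by (simp add: power_mono)
  finally show ?thesis .
qed

lemma one_sided_tester_layers:
  assumes "0 < \<epsilon>"
    and low: "real (card {x \<in> cube d. card x < a}) \<le> \<epsilon> / 4 * 2 ^ d"
    and high: "real (card {x \<in> cube d. b < card x}) \<le> \<epsilon> / 4 * 2 ^ d"
  shows "\<exists>T. one_sided_tester d k \<epsilon> (real (nat \<lceil>4 / \<epsilon>\<rceil> * (d + 1) ^ (b - a))) T"
proof -
  let ?r = "nat \<lceil>4 / \<epsilon>\<rceil>"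
  define N where "N x = (if card x \<le> b then {y \<in> cube d. a \<le> card y} \<inter> {..x} else {})" for x
  have "\<exists>G\<subseteq>cube d. (\<forall>x\<in>G. violation k (N x) f) \<and> 2 * 2 ^ d \<le> real (card G) * ?r"
    if far: "eps_far d k \<epsilon> f" for f
  proof (intro exI conjI)
    let ?G = "{x \<in> cube d. card x \<le> b \<and> violation k ({y \<in> cube d. a \<le> card y} \<inter> {..x}) f}"
    show "\<forall>x\<in>?G. violation k (N x) f"
      by (simp add: N_def)
    have "\<epsilon> / 2 * 2 ^ d \<le> real (card ?G)"
      using eps_far_layer_violations[OF far, of a b] low high by simp
    then have "\<epsilon> / 2 * 2 ^ d * (4 / \<epsilon>) \<le> real (card ?G) * ?r"
      using assms(1) by (intro mult_mono) (auto intro: real_nat_ceiling_ge)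
    then show "2 * 2 ^ d \<le> real (card ?G) * ?r"
      using assms(1) by simp
  qed auto
  moreover have "N x \<subseteq> cube d \<and> card (N x) \<le> (d + 1) ^ (b - a)" if "x \<in> cube d" for x
    using that card_layer_interval[OF that] by (auto simp: N_def)
  ultimately show ?thesis
    using one_sided_tester_sampling[of d N] by blast
qed

section \<open>Choice of the parameters\<close>

lemma card_cube_card_binomial:
  "real (card {x \<in> cube d. P (card x)}) = 2 ^ d * measure_pmf.prob (binomial_pmf d (1 / 2)) {j. P j}"
proof -
  have ne: "cube d \<noteq> {}" by (auto simp: cube_def)
  have binomial: "map_pmf card (pmf_of_set (cube d)) = binomial_pmf d (1 / 2)"
  proof (rule pmf_eqI)
    fix j
    have "cube d \<inter> card -` {j} = {B. B \<subseteq> {..<d} \<and> card B = j}"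
      by (auto simp: cube_def)
    then have "pmf (map_pmf card (pmf_of_set (cube d))) j = real (d choose j) / 2 ^ d"
      using ne n_subsets[of "{..<d}" j] by (simp add: pmf_map measure_pmf_of_set card_cube)
    also have "\<dots> = pmf (binomial_pmf d (1 / 2)) j"
    proof (cases "j \<le> d")
      case True
      then have "(1 / 2 :: real) ^ j * (1 / 2) ^ (d - j) = 1 / 2 ^ d"
        by (simp add: power_add[symmetric] power_one_over)
      then show ?thesis by (simp add: mult.assoc)
    qed (simp add: binomial_eq_0)
    finally show "pmf (map_pmf card (pmf_of_set (cube d))) j = pmf (binomial_pmf d (1 / 2)) j" .
  qed
  have "cube d \<inter> card -` {j. P j} = {x \<in> cube d. P (card x)}"
    by auto
  then show ?thesis
    using ne by (simp add: binomial[symmetric] measure_pmf_of_set card_cube)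
qed

lemma card_cube_card_deviation:
  assumes "0 < d" "0 \<le> s"
  shows "real (card {x \<in> cube d. real (card x) \<le> d / 2 - s}) \<le> exp (- 2 * s\<^sup>2 / d) * 2 ^ d"
    and "real (card {x \<in> cube d. d / 2 + s \<le> real (card x)}) \<le> exp (- 2 * s\<^sup>2 / d) * 2 ^ d"
proof -
  have bd: "binomial_distribution (1 / 2)"
    by unfold_locales auto
  show "real (card {x \<in> cube d. real (card x) \<le> d / 2 - s}) \<le> exp (- 2 * s\<^sup>2 / d) * 2 ^ d"
    using binomial_distribution.prob_le[OF bd assms]
    by (simp add: card_cube_card_binomial[where P = "\<lambda>j. real j \<le> d / 2 - s"] mult.commute)
  show "real (card {x \<in> cube d. d / 2 + s \<le> real (card x)}) \<le> exp (- 2 * s\<^sup>2 / d) * 2 ^ d"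
    using binomial_distribution.prob_ge[OF bd assms]
    by (simp add: card_cube_card_binomial[where P = "\<lambda>j. d / 2 + s \<le> real j"] mult.commute)
qed

lemma central_layers:
  assumes "0 < d" "0 < \<epsilon>" "\<epsilon> \<le> 1"
  obtains a b :: nat
  where "real (card {x \<in> cube d. card x < a}) \<le> \<epsilon> / 4 * 2 ^ d"
    and "real (card {x \<in> cube d. b < card x}) \<le> \<epsilon> / 4 * 2 ^ d"
    and "real (b - a) \<le> 2 * sqrt (d * ln (4 / \<epsilon>) / 2)"
proof
  define s where "s = sqrt (d * ln (4 / \<epsilon>) / 2)"
  have "0 \<le> ln (4 / \<epsilon>)"
    using assms by simp
  then have s: "0 \<le> s" "s\<^sup>2 = d * ln (4 / \<epsilon>) / 2"
    by (simp_all add: s_def)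
  have "- 2 * s\<^sup>2 / d = - ln (4 / \<epsilon>)"
    using assms(1) s(2) by (simp add: field_simps)
  then have tail: "exp (- 2 * s\<^sup>2 / d) = \<epsilon> / 4"
    using assms by (simp add: exp_minus)
  show "real (card {x \<in> cube d. card x < nat \<lceil>d / 2 - s\<rceil>}) \<le> \<epsilon> / 4 * 2 ^ d"
  proof -
    have "{x \<in> cube d. card x < nat \<lceil>d / 2 - s\<rceil>} \<subseteq> {x \<in> cube d. real (card x) \<le> d / 2 - s}"
      by (auto simp: zless_nat_eq_int_zless less_ceiling_iff)
    then have "real (card {x \<in> cube d. card x < nat \<lceil>d / 2 - s\<rceil>})
        \<le> real (card {x \<in> cube d. real (card x) \<le> d / 2 - s})"
      by (intro of_nat_mono card_mono) simp_all
    also have "\<dots> \<le> \<epsilon> / 4 * 2 ^ d"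
      using card_cube_card_deviation(1)[OF assms(1) s(1)] unfolding tail .
    finally show ?thesis .
  qed
  show "real (card {x \<in> cube d. nat \<lfloor>d / 2 + s\<rfloor> < card x}) \<le> \<epsilon> / 4 * 2 ^ d"
  proof -
    have "{x \<in> cube d. nat \<lfloor>d / 2 + s\<rfloor> < card x} \<subseteq> {x \<in> cube d. d / 2 + s \<le> real (card x)}"
      using s(1) by (auto simp: nat_less_iff floor_less_iff)
    then have "real (card {x \<in> cube d. nat \<lfloor>d / 2 + s\<rfloor> < card x})
        \<le> real (card {x \<in> cube d. d / 2 + s \<le> real (card x)})"
      by (intro of_nat_mono card_mono) simp_all
    also have "\<dots> \<le> \<epsilon> / 4 * 2 ^ d"
      using card_cube_card_deviation(2)[OF assms(1) s(1)] unfolding tail .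
    finally show ?thesis .
  qed
  show "real (nat \<lfloor>d / 2 + s\<rfloor> - nat \<lceil>d / 2 - s\<rceil>) \<le> 2 * sqrt (d * ln (4 / \<epsilon>) / 2)"
  proof (cases "nat \<lceil>d / 2 - s\<rceil> \<le> nat \<lfloor>d / 2 + s\<rfloor>")
    case True
    have "real (nat \<lfloor>d / 2 + s\<rfloor>) \<le> d / 2 + s"
      using s(1) by linarith
    moreover have "d / 2 - s \<le> real (nat \<lceil>d / 2 - s\<rceil>)"
      by linarith
    ultimately show ?thesis
      using True unfolding s_def[symmetric] by (simp only: of_nat_diff)
  next
    case False
    then have "nat \<lfloor>d / 2 + s\<rfloor> - nat \<lceil>d / 2 - s\<rceil> = 0"
      by arith
    then show ?thesis
      using s(1) unfolding s_def[symmetric] by simp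
  qed
qed

lemma log_inverse_le_exponent:
  fixes d :: nat
  assumes "2 \<le> d" "0 < \<epsilon>" "\<epsilon> \<le> 1"
  shows "log 2 (1 / \<epsilon>) \<le> sqrt d * log 2 d * log 2 (1 / \<epsilon>)"
proof -
  have "1 \<le> sqrt d * log 2 d"
    using assms(1) mult_mono[of 1 "sqrt d" 1 "log 2 d"] by simp
  moreover have "0 \<le> log 2 (1 / \<epsilon>)"
    using assms(2,3) by simp
  ultimately show ?thesis
    using mult_right_mono by fastforce
qed

lemma sample_count_le_powr:
  assumes "0 < \<epsilon>" "\<epsilon> \<le> 1"
  shows "real (nat \<lceil>4 / \<epsilon>\<rceil>) \<le> 2 powr (3 + log 2 (1 / \<epsilon>))"
proof -
  have "real (nat \<lceil>4 / \<epsilon>\<rceil>) \<le> 4 / \<epsilon> + 1"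
    using assms(1) of_int_ceiling_le_add_one[of "4 / \<epsilon>"] by (simp add: of_nat_nat)
  also have "\<dots> \<le> 8 * (1 / \<epsilon>)"
    using assms by (simp add: field_simps)
  also have "\<dots> = 2 powr (3 + log 2 (1 / \<epsilon>))"
    using assms(1) by (simp add: powr_add)
  finally show ?thesis .
qed

lemma ln_four_div_le:
  assumes "0 < \<epsilon>" "\<epsilon> \<le> 1 / 2"
  shows "ln (4 / \<epsilon>) \<le> 3 * log 2 (1 / \<epsilon>)" and "1 \<le> log 2 (1 / \<epsilon>)"
proof -
  show L: "1 \<le> log 2 (1 / \<epsilon>)"
    using assms by (simp add: le_log_iff field_simps)
  have "ln (4 / \<epsilon>) = ln 2 * (2 + log 2 (1 / \<epsilon>))"
    using assms(1) ln_realpow[of 2 2] by (simp add: ln_div log_def algebra_simps)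
  also have "\<dots> \<le> 2 + log 2 (1 / \<epsilon>)"
    using L ln_le_minus_one[of 2] by (simp add: mult_le_cancel_right1)
  also have "\<dots> \<le> 3 * log 2 (1 / \<epsilon>)"
    using L by simp
  finally show "ln (4 / \<epsilon>) \<le> 3 * log 2 (1 / \<epsilon>)" .
qed

lemma window_power_le_powr:
  assumes "2 \<le> d" "0 < \<epsilon>" "\<epsilon> \<le> 1 / 2" and w: "real w \<le> 2 * sqrt (d * ln (4 / \<epsilon>) / 2)"
  shows "real ((d + 1) ^ w) \<le> 2 powr (6 * (sqrt d * log 2 d * log 2 (1 / \<epsilon>)))"
proof -
  let ?L = "log 2 (1 / \<epsilon>)"
  have L: "1 \<le> ?L" "ln (4 / \<epsilon>) \<le> 3 * ?L"
    using ln_four_div_le[OF assms(2,3)] by auto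
  have "d * ln (4 / \<epsilon>) / 2 \<le> (3 / 2 * sqrt d * ?L)\<^sup>2"
  proof -
    have "d * ln (4 / \<epsilon>) / 2 \<le> d * (3 * ?L) / 2"
      using L(2) by (simp add: mult_left_mono divide_right_mono)
    also have "\<dots> \<le> 9 / 4 * d * ?L\<^sup>2"
    proof -
      have "?L \<le> ?L\<^sup>2"
        using L(1) by (simp add: power2_eq_square)
      then have "3 * ?L / 2 \<le> 9 / 4 * ?L\<^sup>2"
        using L(1) by linarith
      from mult_left_mono[OF this, of "real d"] show ?thesis
        by (simp add: algebra_simps)
    qed
    also have "\<dots> = (3 / 2 * sqrt d * ?L)\<^sup>2"
      by (simp add: power_mult_distrib power_divide)
    finally show ?thesis .
  qed
  then have "sqrt (d * ln (4 / \<epsilon>) / 2) \<le> 3 / 2 * sqrt d * ?L"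
    using L(1) by (intro real_le_lsqrt) auto
  then have w3: "real w \<le> 3 * sqrt d * ?L"
    using w by simp
  have "2 * d \<le> d * d"
    using assms(1) by (intro mult_right_mono) auto
  then have "d + 1 \<le> d * d"
    using assms(1) by linarith
  then have "real (d + 1) \<le> real d ^ 2"
    unfolding power2_eq_square by (metis of_nat_le_iff of_nat_mult)
  then have "real ((d + 1) ^ w) \<le> (real d ^ 2) ^ w"
    by (simp add: power_mono del: of_nat_add)
  also have "\<dots> = real d ^ (2 * w)"
    by (simp only: power_mult)
  also have "\<dots> = real d powr real (2 * w)"
    by (rule powr_realpow[symmetric]) (use assms(1) in simp)
  also have "\<dots> = 2 powr (2 * real w * log 2 d)"
    using assms(1) by (simp add: powr_def log_def)
  also have "\<dots> \<le> 2 powr (6 * (sqrt d * log 2 d * ?L))"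
  proof (rule powr_mono)
    have "0 \<le> log 2 d" using assms(1) by simp
    then show "2 * real w * log 2 d \<le> 6 * (sqrt d * log 2 d * ?L)"
      using mult_right_mono[OF w3, of "log 2 d"] by (simp add: algebra_simps)
  qed simp
  finally show ?thesis .
qed

lemma one_sided_tester_mono:
  "one_sided_tester d k \<epsilon> q T \<Longrightarrow> q \<le> q' \<Longrightarrow> one_sided_tester d k \<epsilon> q' T"
  unfolding one_sided_tester_def by fastforce

lemma one_sided_tester_exists:
  fixes d k :: nat and \<epsilon> :: real
  assumes "0 < \<epsilon>" "\<epsilon> \<le> 1"
  defines "X \<equiv> sqrt d * log 2 d * log 2 (1 / \<epsilon>)"
  shows "\<exists>T. one_sided_tester d k \<epsilon> (2 powr (7 * (1 + X))) T"
proof (cases "d \<le> 1")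
  case True
  then have "X = 0" and "(2 :: real) ^ d \<le> 2 powr 7"
    by (auto simp: X_def le_Suc_eq)
  then show ?thesis
    using one_sided_tester_mono[OF one_sided_tester_exhaustive[OF assms(1)]] by auto
next
  case False
  then have d: "2 \<le> d" by simp
  let ?L = "log 2 (1 / \<epsilon>)" and ?r = "nat \<lceil>4 / \<epsilon>\<rceil>"
  have L: "0 \<le> ?L" "?L \<le> X"
    using assms log_inverse_le_exponent[OF d assms(1,2)] by simp_all
  have r: "real ?r \<le> 2 powr (3 + ?L)"
    using sample_count_le_powr[OF assms(1,2)] .
  consider "k = 0" | "k \<noteq> 0" "1 / 2 < \<epsilon>" | "k \<noteq> 0" "\<epsilon> \<le> 1 / 2"
    by linarith
  then show ?thesis
  proof cases
    case 1
    have "2 powr (3 + ?L) \<le> 2 powr (7 * (1 + X))"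
      using L by (intro powr_mono) auto
    then have "real ?r \<le> 2 powr (7 * (1 + X))"
      using r by linarith
    then show ?thesis
      unfolding 1 using one_sided_tester_mono[OF one_sided_tester_k0[OF assms(1)]] by blast
  next
    case 2
    then have "one_sided_tester d k \<epsilon> 0 (violation_tester k (return_pmf {}))"
      by (intro one_sided_tester_trivial) auto
    from one_sided_tester_mono[OF this, of "2 powr (7 * (1 + X))"] show ?thesis
      by auto
  next
    case 3
    obtain a b where ab: "real (card {x \<in> cube d. card x < a}) \<le> \<epsilon> / 4 * 2 ^ d"
      "real (card {x \<in> cube d. b < card x}) \<le> \<epsilon> / 4 * 2 ^ d"
      "real (b - a) \<le> 2 * sqrt (d * ln (4 / \<epsilon>) / 2)"
      using central_layers[of d \<epsilon>] d assms(1,2) by auto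
    obtain T where T: "one_sided_tester d k \<epsilon> (real (?r * (d + 1) ^ (b - a))) T"
      using one_sided_tester_layers[OF assms(1) ab(1,2)] by blast
    have "real (?r * (d + 1) ^ (b - a)) \<le> 2 powr (3 + ?L) * 2 powr (6 * X)"
      unfolding of_nat_mult X_def using r window_power_le_powr[OF d assms(1) 3(2) ab(3)]
      by (intro mult_mono) auto
    also have "\<dots> \<le> 2 powr (7 * (1 + X))"
      unfolding powr_add[symmetric] using L by (intro powr_mono) auto
    finally show ?thesis
      using one_sided_tester_mono[OF T] by blast
  qed
qed

theorem theorem1p2:
  "\<exists>C>0. \<forall>d \<epsilon> k. 0 < \<epsilon> \<and> \<epsilon> \<le> 1 \<longrightarrow>
     (\<exists>T :: na_tester.
        (\<forall>(Q, D) \<in> set_pmf T. Q \<subseteq> cube d \<and>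
            real (card Q) \<le> 2 powr (C * (1 + sqrt (real d) * log 2 (real d) * log 2 (1 / \<epsilon>))))
      \<and> (\<forall>f. k_monotone d k f \<longrightarrow> accept_prob T f = 1)
      \<and> (\<forall>f. eps_far d k \<epsilon> f \<longrightarrow> accept_prob T f \<le> 1 / 3))"
  using one_sided_tester_exists unfolding one_sided_tester_def
  by (intro exI[of _ 7]) auto

end
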